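(* Let $b>2$ and let $\varphi:B(b)/\mathbb{Z}\to\mathbb{C}/\mathbb{Z}$ be a conformal embedding with $\varphi(0)=0$ and $\varphi_*(1)=1$ on fundamental groups. For every straight cylinder $T$ of modulus $1$ contained in $B(b-2)/\mathbb{Z}$, the image $\varphi(T)$ is contained in a straight cylinder of modulus at most $2$.
   Context: $B(b)=\{z\in\mathbb{C}:|\operatorname{Im}z|<b\}$ and $B(b)/\mathbb{Z}$ is its quotient by $z\mapsto z+1$. Fundamental groups of $B(b)/\mathbb{Z}$ and $\mathbb{C}/\mathbb{Z}$ are identified with $\mathbb{Z}$. A straight cylinder in $\mathbb{C}/\mathbb{Z}$ is a set of the form $\{z:\operatorname{Im}z\in I\}/\mathbb{Z}$ for an interval $I\subset\mathbb{R}$; its modulus is the length of $I$. *)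

theory Defs
  imports "HOL-Complex_Analysis.Complex_Analysis"
begin

text \<open>The band B(b) = {z. |Im z| < b}; we work with lifts to the universal cover
  of the annuli, i.e. Z-periodic sets and maps commuting with z |-> z+1.\<close>
definition band :: "real \<Rightarrow> complex set" where
  "band b = {z. \<bar>Im z\<bar> < b}"

text \<open>Lift of a conformal embedding phi : B(b)/Z -> C/Z with phi(0)=0 and
  phi_*(1)=1: holomorphic F on B(b) with F(z+1)=F(z)+1, F 0 = 0, and injective
  modulo Z.\<close>
definition lift_conformal_embedding :: "real \<Rightarrow> (complex \<Rightarrow> complex) \<Rightarrow> bool" where
  "lift_conformal_embedding b F \<longleftrightarrow>
     F holomorphic_on band b \<and>
     (\<forall>z\<in>band b. F (z + 1) = F z + 1) \<and>
     F 0 = 0 \<and>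
     (\<forall>z\<in>band b. \<forall>w\<in>band b. F z - F w \<in> \<int> \<longrightarrow> z - w \<in> \<int>)"

definition bdd_interval :: "real set \<Rightarrow> bool" where
  "bdd_interval I \<longleftrightarrow> is_interval I \<and> I \<noteq> {} \<and> bounded I"

definition straight_cyl :: "real set \<Rightarrow> complex set" where
  "straight_cyl I = {z. Im z \<in> I}"

definition cyl_modulus :: "real set \<Rightarrow> real" where
  "cyl_modulus I = Sup I - Inf I"

end

theory Submission
  imports Defs
begin

text \<open>Injectivity modulo \<open>\<int>\<close> together with Bloch's theorem bounds \<open>|F'|\<close> by 18 on \<open>B(b - 1)\<close>.
  Since \<open>F z - z\<close> is 1-periodic, \<open>h = F' - 1\<close> is periodic with zero mean on every horizontal unit
  segment. Integrating \<open>h\<close> against \<open>\<pi> cot (\<pi> (w - z))\<close> around a rectangle of width 1 and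
  height \<open>2 (b - 1)\<close>, the vertical sides cancel, while on the horizontal sides the kernel differs
  from \<open>\<plusminus>\<pi>i\<close> by \<open>O(e\<^sup>-\<^sup>2\<^sup>\<pi>)\<close>; the residue \<open>h z\<close> is therefore bounded in modulus by
  \<open>38 e\<^sup>-\<^sup>2\<^sup>\<pi>/(1 - e\<^sup>-\<^sup>2\<^sup>\<pi>) \<le> 1/2\<close> on \<open>B(b - 2)\<close>. Two points of a cylinder of modulus 1 are,
  after an integer translation, at distance at most 2 with imaginary parts at most 1 apart, so \<open>Im F\<close> varies there by at most \<open>1 + 2/2 = 2\<close>.\<close>

lemma open_band: "open (band b)"
  unfolding band_def by (intro open_Collect_less continuous_intros)

lemma band_add_real_iff: "Im w = 0 \<Longrightarrow> z + w \<in> band b \<longleftrightarrow> z \<in> band b"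
  by (simp add: band_def)

lemma ball_subset_band: "\<bar>Im z\<bar> \<le> b - r \<Longrightarrow> ball z r \<subseteq> band b"
proof
  fix w assume "\<bar>Im z\<bar> \<le> b - r" "w \<in> ball z r"
  moreover have "\<bar>Im w - Im z\<bar> \<le> dist z w"
    using abs_Im_le_cmod[of "w - z"] by (simp add: dist_norm norm_minus_commute)
  ultimately show "w \<in> band b" by (simp add: band_def)
qed

lemma equivariant_add_of_int:
  assumes per: "\<forall>z\<in>band b. F (z + 1) = F z + 1" and z: "z \<in> band b"
  shows "F (z + of_int n) = F z + of_int n"
proof (induction n rule: int_induct[where k = 0])
  case base then show ?case by simp
next
  case (step1 i)
  have "z + of_int i \<in> band b" using z by (simp add: band_add_real_iff)
  then have "F (z + of_int i + 1) = F (z + of_int i) + 1" using per by blast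
  then show ?case using step1 by (simp add: algebra_simps)
next
  case (step2 i)
  have "z + of_int (i - 1) \<in> band b" using z by (simp add: band_add_real_iff)
  then have "F (z + of_int (i - 1) + 1) = F (z + of_int (i - 1)) + 1" using per by blast
  then show ?case using step2 by (simp add: algebra_simps)
qed

lemma lift_conformal_embedding_diff_Ints:
  assumes L: "lift_conformal_embedding b F" and z: "z \<in> band b" and w: "w \<in> band b"
    and diff: "F z - F w \<in> \<int>"
  shows "z - w = F z - F w"
proof -
  have "z - w \<in> \<int>" using L z w diff unfolding lift_conformal_embedding_def by blast
  then obtain n where n: "z = w + of_int n" by (metis Ints_cases add_diff_cancel_left' add_diff_eq)
  have "F (w + of_int n) = F w + of_int n"
    using L w unfolding lift_conformal_embedding_def by (intro equivariant_add_of_int) auto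
  then show ?thesis using n by simp
qed

text \<open>Bloch's theorem puts a disc of radius 3/2 into the image of a unit disc; two of its points
  differ by 2, and injectivity modulo \<open>\<int>\<close> forces their preimages to differ by 2 as well.\<close>
lemma lift_conformal_embedding_norm_deriv_less:
  assumes L: "lift_conformal_embedding b F" and sub: "ball z 1 \<subseteq> band b"
  shows "norm (deriv F z) < 18"
proof (rule ccontr)
  assume "\<not> norm (deriv F z) < 18"
  moreover have "F holomorphic_on ball z 1"
    using L sub unfolding lift_conformal_embedding_def by (blast intro: holomorphic_on_subset)
  ultimately obtain c where c: "ball c (3/2) \<subseteq> F ` ball z 1"
    using Bloch[of F z 1 "3/2"] by auto
  have "c - 1 \<in> ball c (3/2)" "c + 1 \<in> ball c (3/2)" by (auto simp: dist_norm)
  then have "c - 1 \<in> F ` ball z 1" "c + 1 \<in> F ` ball z 1" using c by blast+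
  then obtain u v where u: "u \<in> ball z 1" "F u = c - 1" and v: "v \<in> ball z 1" "F v = c + 1"
    by (metis imageE)
  have "v - u = F v - F u"
    using u v sub by (intro lift_conformal_embedding_diff_Ints[OF L]) auto
  then have "v - u = 2" using u v by simp
  moreover have "dist v u < 2"
    using u v dist_triangle_less_add[of v z 1 u 1] by (simp add: dist_commute)
  ultimately show False by (simp add: dist_norm)
qed

lemma lift_conformal_embedding_deriv_add_1:
  assumes L: "lift_conformal_embedding b F" and w: "w \<in> band b"
  shows "deriv F (w + 1) = deriv F w"
proof -
  have hol: "F holomorphic_on band b" and per: "\<forall>z\<in>band b. F (z + 1) = F z + 1"
    using L unfolding lift_conformal_embedding_def by auto
  have w1: "w + 1 \<in> band b" using w by (simp add: band_add_real_iff)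
  have "((\<lambda>u. u + 1) has_field_derivative 1) (at w)"
    by (auto intro!: derivative_eq_intros)
  from DERIV_chain2[OF holomorphic_derivI[OF hol open_band w1] this]
  have "((\<lambda>u. F (u + 1)) has_field_derivative deriv F (w + 1)) (at w)"
    by simp
  then have "((\<lambda>u. F u + 1) has_field_derivative deriv F (w + 1)) (at w)"
    by (rule has_field_derivative_transform_within_open[OF _ open_band w]) (use per in auto)
  moreover have "((\<lambda>u. F u + 1) has_field_derivative deriv F w) (at w)"
    using holomorphic_derivI[OF hol open_band w] by (auto intro!: derivative_eq_intros)
  ultimately show ?thesis by (rule DERIV_unique)
qed

lemma lift_conformal_embedding_deriv_mean_zero:
  assumes L: "lift_conformal_embedding b F" and a: "a \<in> band b"
  shows "((\<lambda>w. deriv F w - 1) has_contour_integral 0) (linepath a (a + 1))"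
proof -
  have hol: "F holomorphic_on band b" and per: "\<forall>z\<in>band b. F (z + 1) = F z + 1"
    using L unfolding lift_conformal_embedding_def by auto
  have "closed_segment a (a + 1) \<subseteq> band b"
    using a closed_segment_same_Im[of a "a + 1"] by (auto simp: band_def)
  moreover have "((\<lambda>w. F w - w) has_field_derivative deriv F x - 1) (at x within band b)"
    if "x \<in> band b" for x
    using holomorphic_derivI[OF hol open_band that] by (auto intro!: derivative_eq_intros)
  ultimately have "((\<lambda>w. deriv F w - 1) has_contour_integral
      (F (a + 1) - (a + 1)) - (F a - a)) (linepath a (a + 1))"
    using contour_integral_primitive[where S = "band b" and f = "\<lambda>w. F w - w"
        and f' = "\<lambda>w. deriv F w - 1" and g = "linepath a (a + 1)"] by auto
  then show ?thesis using per a by simp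
qed

text \<open>\<open>cot_kernel z w = \<pi> cot (\<pi> (w - z))\<close>, written through \<open>exp (2\<pi>i\<cdot>)\<close> so that its
  periodicity and its limits \<open>\<plusminus>\<pi>i\<close> as \<open>Im w \<rightarrow> \<mp>\<infinity>\<close> are visible.\<close>
definition cot_kernel :: "complex \<Rightarrow> complex \<Rightarrow> complex" where
  "cot_kernel z w = pi * \<i> * (exp (2 * pi * \<i> * w) + exp (2 * pi * \<i> * z))
                            / (exp (2 * pi * \<i> * w) - exp (2 * pi * \<i> * z))"

lemma exp_2pi_i_eq_iff: "exp (2 * pi * \<i> * w) = exp (2 * pi * \<i> * z) \<longleftrightarrow> w - z \<in> \<int>"
proof
  assume "exp (2 * pi * \<i> * w) = exp (2 * pi * \<i> * z)"
  then obtain n :: int where "2 * pi * \<i> * w = 2 * pi * \<i> * z + (of_int (2 * n) * pi) * \<i>"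
    unfolding exp_eq by blast
  then have "(2 * pi * \<i>) * (w - z) = (2 * pi * \<i>) * of_int n" by (simp add: algebra_simps)
  then show "w - z \<in> \<int>" by simp
next
  assume "w - z \<in> \<int>"
  then obtain n where "w = z + of_int n" by (metis Ints_cases add_diff_cancel_left' add_diff_eq)
  then show "exp (2 * pi * \<i> * w) = exp (2 * pi * \<i> * z)" by (simp add: algebra_simps)
qed

lemma cot_kernel_add_1 [simp]: "cot_kernel z (w + 1) = cot_kernel z w"
  using exp_2pi_i_eq_iff[of "w + 1" w] by (simp add: cot_kernel_def)

lemma cot_kernel_swap: "cot_kernel w z = - cot_kernel z w"
  by (simp add: cot_kernel_def add.commute minus_divide_right)

lemma holomorphic_on_cot_kernel:
  assumes "\<And>w. w \<in> S \<Longrightarrow> w - z \<notin> \<int>"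
  shows "cot_kernel z holomorphic_on S"
proof -
  have "exp (2 * pi * \<i> * w) - exp (2 * pi * \<i> * z) \<noteq> 0" if "w \<in> S" for w
    using assms[OF that] exp_2pi_i_eq_iff[of w z] by auto
  then show ?thesis unfolding cot_kernel_def by (intro holomorphic_intros)
qed

lemma residue_mult_cot_kernel:
  assumes S: "open S" "z \<in> S" and hol: "h holomorphic_on S"
    and no_translate: "\<And>w. w \<in> S - {z} \<Longrightarrow> w - z \<notin> \<int>"
  shows "residue (\<lambda>w. h w * cot_kernel z w) z = h z"
proof (rule residue_simple'[OF S])
  define E where "E = (\<lambda>w. exp (2 * pi * \<i> * w))"
  have Ez: "E z \<noteq> 0" unfolding E_def by simp
  show "(\<lambda>w. h w * cot_kernel z w) holomorphic_on S - {z}"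
    by (intro holomorphic_intros holomorphic_on_subset[OF hol] holomorphic_on_cot_kernel no_translate)
      auto
  have "(E has_field_derivative 2 * pi * \<i> * E z) (at z)"
    unfolding E_def by (auto intro!: derivative_eq_intros simp: algebra_simps)
  then have "((\<lambda>w. (E w - E z) / (w - z)) \<longlongrightarrow> 2 * pi * \<i> * E z) (at z)"
    by (simp add: has_field_derivative_iff)
  then have inverse_lim:
    "((\<lambda>w. inverse ((E w - E z) / (w - z))) \<longlongrightarrow> inverse (2 * pi * \<i> * E z)) (at z)"
    by (rule tendsto_inverse) (use Ez in simp)
  moreover have "isCont h z"
    using S hol by (meson continuous_on_eq_continuous_at holomorphic_on_imp_continuous_on)
  then have "(h \<longlongrightarrow> h z) (at z)" by (simp add: isCont_def)
  moreover have "(E \<longlongrightarrow> E z) (at z)" unfolding E_def by (intro tendsto_intros)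
  ultimately have "((\<lambda>w. h w * (pi * \<i> * (E w + E z)) * inverse ((E w - E z) / (w - z))) \<longlongrightarrow>
      h z * (pi * \<i> * (E z + E z)) * inverse (2 * pi * \<i> * E z)) (at z)"
    by (intro inverse_lim tendsto_intros)
  moreover have "h z * (pi * \<i> * (E z + E z)) * inverse (2 * pi * \<i> * E z) = h z"
    using Ez by (simp add: field_simps)
  ultimately show "((\<lambda>w. h w * cot_kernel z w * (w - z)) \<longlongrightarrow> h z) (at z)"
    by (simp add: cot_kernel_def E_def mult.assoc)
qed

lemma norm_two_mult_div_diff_le:
  fixes p q :: complex
  assumes "norm q \<le> T * norm p" "0 \<le> T" "T < 1" "p \<noteq> 0"
  shows "norm (2 * q / (p - q)) \<le> 2 * T / (1 - T)"
proof -
  have "(1 - T) * norm p \<le> norm p - norm q" using assms(1) by (simp add: algebra_simps)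
  also have "\<dots> \<le> norm (p - q)" by (rule norm_triangle_ineq2)
  finally have denom: "(1 - T) * norm p \<le> norm (p - q)" .
  have "norm (2 * q / (p - q)) = 2 * norm q / norm (p - q)" by (simp add: norm_divide norm_mult)
  also have "\<dots> \<le> 2 * (T * norm p) / ((1 - T) * norm p)"
    using assms denom by (intro frac_le) auto
  also have "\<dots> = 2 * T / (1 - T)" using assms(4) by simp
  finally show ?thesis .
qed

lemma norm_cot_kernel_minus_le:
  assumes "Im w \<le> Im z - c" "0 < c"
  shows "norm (cot_kernel z w - pi * \<i>) \<le> pi * (2 * exp (-2 * pi * c) / (1 - exp (-2 * pi * c)))"
proof -
  define p q where "p = exp (2 * pi * \<i> * w)" and "q = exp (2 * pi * \<i> * z)"
  have "2 * pi * (Im w + c) \<le> 2 * pi * Im z" using assms by (intro mult_left_mono) auto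
  then have "norm q \<le> exp (-2 * pi * c) * norm p"
    unfolding p_def q_def by (simp add: exp_add[symmetric] algebra_simps)
  moreover have "exp (-2 * pi * c) < 1" using assms(2) by simp
  ultimately have bound: "norm (2 * q / (p - q)) \<le> 2 * exp (-2 * pi * c) / (1 - exp (-2 * pi * c))"
    by (intro norm_two_mult_div_diff_le) (auto simp: p_def)
  moreover have "exp (-2 * pi * c) * norm p < norm p"
    using \<open>exp (-2 * pi * c) < 1\<close> by (simp add: p_def)
  then have "norm q < norm p" using \<open>norm q \<le> exp (-2 * pi * c) * norm p\<close> by linarith
  then have "p - q \<noteq> 0" by auto
  then have "cot_kernel z w - pi * \<i> = pi * \<i> * (2 * q / (p - q))"
    unfolding cot_kernel_def p_def[symmetric] q_def[symmetric] by (simp add: field_simps)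
  then have "norm (cot_kernel z w - pi * \<i>) = pi * norm (2 * q / (p - q))"
    by (simp only: norm_mult) simp
  with bound show ?thesis by (metis mult_left_mono pi_ge_zero)
qed

lemma contour_integral_rectpath_mult_cot_kernel:
  assumes S: "open S" "connected S" "cbox a c \<subseteq> S" and z: "z \<in> box a c"
    and hol: "h holomorphic_on S" and no_translate: "\<And>w. w \<in> S - {z} \<Longrightarrow> w - z \<notin> \<int>"
  shows "contour_integral (rectpath a c) (\<lambda>w. h w * cot_kernel z w) = 2 * pi * \<i> * h z"
proof -
  have ord: "Re a \<le> Re c" "Im a \<le> Im c" using z by (auto simp: in_box_complex_iff)
  have "path_image (rectpath a c) \<subseteq> S - {z}"
    using path_image_rectpath_subset_cbox[OF ord] path_image_rectpath_inter_box[OF ord] S z by blast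
  moreover have "\<forall>w. w \<notin> S \<longrightarrow> winding_number (rectpath a c) w = 0"
    using winding_number_rectpath_outside[OF ord] S by blast
  moreover have "(\<lambda>w. h w * cot_kernel z w) holomorphic_on S - {z}"
    by (intro holomorphic_intros holomorphic_on_subset[OF hol] holomorphic_on_cot_kernel no_translate)
      auto
  ultimately have "contour_integral (rectpath a c) (\<lambda>w. h w * cot_kernel z w) =
      2 * pi * \<i> * (\<Sum>p\<in>{z}. winding_number (rectpath a c) p * residue (\<lambda>w. h w * cot_kernel z w) p)"
    using S by (intro Residue_theorem) auto
  then show ?thesis
    using winding_number_rectpath[OF z] residue_mult_cot_kernel[OF _ _ hol no_translate] S z
    by (simp add: subsetD[OF S(3) box_subset_cbox[THEN subsetD]])
qed

lemma contour_integral_rectpath_periodic: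
  assumes width: "Re c = Re a + 1" and height: "Im a < Im c"
    and int: "f contour_integrable_on rectpath a c"
    and per: "\<And>s. s \<in> {Im a..Im c} \<Longrightarrow> f (Complex (Re c) s) = f (Complex (Re a) s)"
  shows "contour_integral (rectpath a c) f =
    contour_integral (linepath a (a + 1)) f - contour_integral (linepath (c - 1) c) f"
proof -
  have corners: "Complex (Re c) (Im a) = a + 1" "Complex (Re a) (Im c) = c - 1"
    using width by (simp_all add: complex_eq_iff)
  have rect: "rectpath a c = linepath a (a + 1) +++ linepath (a + 1) c +++ linepath c (c - 1)
      +++ linepath (c - 1) a"
    unfolding rectpath_def Let_def corners ..
  have "contour_integral (linepath a (a + 1)) f + contour_integral (linepath (a + 1) c) f
      + contour_integral (linepath c (c - 1)) f + contour_integral (linepath (c - 1) a) f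
      = contour_integral (rectpath a c) f"
    using has_contour_integral_integral[OF int] unfolding rect
    by (rule has_chain_integral_chain_integral4)
  moreover have "contour_integral (linepath c (c - 1)) f = - contour_integral (linepath (c - 1) c) f"
    by (metis contour_integral_reversepath reversepath_linepath valid_path_linepath)
  moreover have "contour_integral (linepath (c - 1) a) f = - contour_integral (linepath a (c - 1)) f"
    by (metis contour_integral_reversepath reversepath_linepath valid_path_linepath)
  moreover have "contour_integral (linepath (a + 1) c) f = contour_integral (linepath a (c - 1)) f"
  proof -
    have "contour_integral (linepath (a + 1) c) f = \<i> * integral {Im a..Im c} (\<lambda>s. f (Complex (Re c) s))"
      using width height by (intro contour_integral_linepath_same_Re) auto
    also have "\<dots> = \<i> * integral {Im a..Im c} (\<lambda>s. f (Complex (Re a) s))"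
      using per by (intro arg_cong[where f = "(*) \<i>"] integral_cong) auto
    also have "\<dots> = contour_integral (linepath a (c - 1)) f"
      using width height by (intro contour_integral_linepath_same_Re[symmetric]) auto
    finally show ?thesis .
  qed
  ultimately show ?thesis by (simp add: algebra_simps)
qed

lemma norm_contour_integral_mean_zero_le:
  assumes mean: "(h has_contour_integral 0) (linepath a b)"
    and bound: "\<And>w. w \<in> closed_segment a b \<Longrightarrow> norm (h w * (k w - \<kappa>)) \<le> B"
  shows "norm (contour_integral (linepath a b) (\<lambda>w. h w * k w)) \<le> B * norm (b - a)"
proof -
  have B: "0 \<le> B" using bound[of a] norm_ge_zero by (meson ends_in_segment(1) order_trans)
  show ?thesis
  proof (cases "(\<lambda>w. h w * k w) contour_integrable_on linepath a b")
    case True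
    then have "((\<lambda>w. h w * k w - \<kappa> * h w) has_contour_integral
        contour_integral (linepath a b) (\<lambda>w. h w * k w) - \<kappa> * 0) (linepath a b)"
      by (intro has_contour_integral_diff has_contour_integral_lmul mean has_contour_integral_integral)
    then show ?thesis
      using B bound by (intro has_contour_integral_bound_linepath) (auto simp: algebra_simps)
  next
    case False
    with B show ?thesis by (simp add: not_integrable_contour_integral)
  qed
qed

text \<open>On a horizontal line at vertical distance \<open>d\<close> from \<open>z\<close> the kernel is uniformly close to
  the constant \<open>\<plusminus>\<pi>i\<close>, which \<open>h\<close> integrates to zero.\<close>
lemma norm_contour_integral_mult_cot_kernel_le:
  assumes mean: "(h has_contour_integral 0) (linepath a (a + 1))"
    and bound: "\<And>w. w \<in> closed_segment a (a + 1) \<Longrightarrow> norm (h w) \<le> M"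
    and far: "d \<le> \<bar>Im a - Im z\<bar>" and d: "0 < d"
  shows "norm (contour_integral (linepath a (a + 1)) (\<lambda>w. h w * cot_kernel z w))
    \<le> M * (pi * (2 * exp (-2 * pi * d) / (1 - exp (-2 * pi * d))))"
proof -
  define \<epsilon> where "\<epsilon> = pi * (2 * exp (-2 * pi * d) / (1 - exp (-2 * pi * d)))"
  obtain \<kappa> where \<kappa>: "\<And>w. Im w = Im a \<Longrightarrow> norm (cot_kernel z w - \<kappa>) \<le> \<epsilon>"
  proof (cases "Im a \<le> Im z")
    case True
    then show ?thesis
      using that[of "pi * \<i>"] far d norm_cot_kernel_minus_le[of _ z d] unfolding \<epsilon>_def by force
  next
    case False
    have "norm (cot_kernel z w + pi * \<i>) \<le> \<epsilon>" if "Im w = Im a" for w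
      using norm_cot_kernel_minus_le[of z w d] that False far d cot_kernel_swap[of w z]
      unfolding \<epsilon>_def by (simp add: norm_minus_commute add.commute)
    then show ?thesis using that[of "- pi * \<i>"] by simp
  qed
  have "norm (h w * (cot_kernel z w - \<kappa>)) \<le> M * \<epsilon>" if "w \<in> closed_segment a (a + 1)" for w
  proof -
    have "Im w = Im a" using that closed_segment_same_Im[of a "a + 1"] by auto
    moreover have "0 \<le> M" using bound[OF that] norm_ge_zero order_trans by blast
    ultimately show ?thesis
      unfolding norm_mult using bound[OF that] \<kappa> by (intro mult_mono) auto
  qed
  then show ?thesis
    using norm_contour_integral_mean_zero_le[OF mean] unfolding \<epsilon>_def by fastforce
qed

lemma Ints_eq_0_if_abs_Re_less_1: "w \<in> \<int> \<Longrightarrow> \<bar>Re w\<bar> < 1 \<Longrightarrow> w = 0"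
  by (auto elim!: Ints_cases)

lemma contour_integral_unit_rectangle_mult_cot_kernel:
  fixes h :: "complex \<Rightarrow> complex"
  assumes hol: "h holomorphic_on band b" and per: "\<And>w. w \<in> band b \<Longrightarrow> h (w + 1) = h w"
    and \<beta>: "\<beta> < b" and z: "\<bar>Im z\<bar> < \<beta>"
  defines "a \<equiv> Complex (Re z - 1/2) (- \<beta>)" and "a' \<equiv> Complex (Re z - 1/2) \<beta>"
  shows "2 * pi * \<i> * h z = contour_integral (linepath a (a + 1)) (\<lambda>w. h w * cot_kernel z w)
                            - contour_integral (linepath a' (a' + 1)) (\<lambda>w. h w * cot_kernel z w)"
proof -
  define f where "f = (\<lambda>w. h w * cot_kernel z w)"
  define c where "c = a' + 1"
  define S where "S = box (Complex (Re z - 1) (- b)) (Complex (Re z + 1) b)"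
  have S: "open S" "connected S" "S \<subseteq> band b" "cbox a c \<subseteq> S"
    using \<beta> unfolding S_def a_def a'_def c_def band_def
    by (auto simp: convex_connected in_box_complex_iff in_cbox_complex_iff)
  have z_box: "z \<in> box a c" using z unfolding a_def a'_def c_def by (auto simp: in_box_complex_iff)
  have no_translate: "w - z \<notin> \<int>" if "w \<in> S - {z}" for w
    using that Ints_eq_0_if_abs_Re_less_1[of "w - z"] unfolding S_def
    by (auto simp: in_box_complex_iff abs_less_iff)
  have "contour_integral (rectpath a c) f = 2 * pi * \<i> * h z"
    unfolding f_def using S z_box no_translate
    by (intro contour_integral_rectpath_mult_cot_kernel[where S = S] holomorphic_on_subset[OF hol]) auto
  moreover have "contour_integral (rectpath a c) f =
      contour_integral (linepath a (a + 1)) f - contour_integral (linepath (c - 1) c) f"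
  proof (rule contour_integral_rectpath_periodic)
    have ord: "Re a \<le> Re c" "Im a \<le> Im c" using z_box by (auto simp: in_box_complex_iff)
    have "path_image (rectpath a c) \<subseteq> S - {z}"
      using path_image_rectpath_subset_cbox[OF ord] path_image_rectpath_inter_box[OF ord] S z_box
      by blast
    then show "f contour_integrable_on rectpath a c"
      unfolding f_def using S
      by (intro contour_integrable_holomorphic_simple[where S = "S - {z}"] holomorphic_intros
          holomorphic_on_subset[OF hol] holomorphic_on_cot_kernel no_translate) auto
    show "f (Complex (Re c) s) = f (Complex (Re a) s)" if "s \<in> {Im a..Im c}" for s
    proof -
      have "Complex (Re a) s \<in> band b" using that \<beta> unfolding a_def a'_def c_def band_def by auto
      moreover have "Complex (Re c) s = Complex (Re a) s + 1"
        unfolding a_def a'_def c_def by (simp add: complex_eq_iff)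
      ultimately show ?thesis unfolding f_def using per by simp
    qed
  qed (use z in \<open>auto simp: a_def a'_def c_def\<close>)
  ultimately show ?thesis unfolding f_def c_def by simp
qed

lemma periodic_mean_zero_norm_le:
  fixes h :: "complex \<Rightarrow> complex"
  assumes hol: "h holomorphic_on band b"
    and per: "\<And>w. w \<in> band b \<Longrightarrow> h (w + 1) = h w"
    and mean: "\<And>a. a \<in> band b \<Longrightarrow> (h has_contour_integral 0) (linepath a (a + 1))"
    and bound: "\<And>w. \<bar>Im w\<bar> \<le> \<beta> \<Longrightarrow> norm (h w) \<le> M"
    and \<beta>: "\<beta> < b" and d: "0 < d" and z: "\<bar>Im z\<bar> \<le> \<beta> - d"
  shows "norm (h z) \<le> 2 * M * exp (-2 * pi * d) / (1 - exp (-2 * pi * d))"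
proof -
  define \<epsilon> where "\<epsilon> = pi * (2 * exp (-2 * pi * d) / (1 - exp (-2 * pi * d)))"
  have side: "norm (contour_integral (linepath e (e + 1)) (\<lambda>w. h w * cot_kernel z w)) \<le> M * \<epsilon>"
    if "\<bar>Im e\<bar> = \<beta>" for e
  proof -
    have "closed_segment e (e + 1) \<subseteq> {w. Im w = Im e}"
      using closed_segment_same_Im[of e "e + 1"] by auto
    then show ?thesis
      unfolding \<epsilon>_def using that \<beta> z d bound
      by (intro norm_contour_integral_mult_cot_kernel_le mean) (auto simp: band_def)
  qed
  define I where "I = (\<lambda>e. contour_integral (linepath e (e + 1)) (\<lambda>w. h w * cot_kernel z w))"
  have "2 * pi * norm (h z) = norm (2 * pi * \<i> * h z)" by (simp add: norm_mult)
  also have "\<dots> = norm (I (Complex (Re z - 1/2) (- \<beta>)) - I (Complex (Re z - 1/2) \<beta>))"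
    unfolding I_def using z d by (subst contour_integral_unit_rectangle_mult_cot_kernel[OF hol per \<beta>]) auto
  also have "\<dots> \<le> norm (I (Complex (Re z - 1/2) (- \<beta>))) + norm (I (Complex (Re z - 1/2) \<beta>))"
    by (rule norm_triangle_ineq4)
  also have "\<dots> \<le> 2 * (M * \<epsilon>)"
    using side[of "Complex (Re z - 1/2) (- \<beta>)"] side[of "Complex (Re z - 1/2) \<beta>"] z d
    unfolding I_def by simp
  also have "\<dots> = 2 * pi * (2 * M * exp (-2 * pi * d) / (1 - exp (-2 * pi * d)))"
    unfolding \<epsilon>_def by simp
  finally show ?thesis by (rule mult_left_le_imp_le) simp
qed

lemma exp_two_pi_ge: "87 \<le> exp (2 * pi)"
proof -
  have "(1 + 6 / real 8) ^ 8 \<le> exp 6" by (rule exp_ge_one_plus_x_over_n_power_n) auto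
  then have "87 \<le> exp (6 :: real)" by (simp add: power_def)
  also have "exp 6 \<le> exp (2 * pi)" using pi_gt3 by simp
  finally show ?thesis .
qed

lemma lift_conformal_embedding_norm_deriv_minus_1_le:
  assumes L: "lift_conformal_embedding b F" and z: "\<bar>Im z\<bar> \<le> b - 2"
  shows "norm (deriv F z - 1) \<le> 1/2"
proof -
  have hol: "F holomorphic_on band b" using L unfolding lift_conformal_embedding_def by blast
  have "norm (deriv F w - 1) \<le> 19" if "\<bar>Im w\<bar> \<le> b - 1" for w
    using lift_conformal_embedding_norm_deriv_less[OF L ball_subset_band[OF that]]
      norm_triangle_ineq4[of "deriv F w" 1] by simp
  then have "norm (deriv F z - 1) \<le> 2 * 19 * exp (-2 * pi * 1) / (1 - exp (-2 * pi * 1))"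
    using z hol lift_conformal_embedding_deriv_add_1[OF L]
    by (intro periodic_mean_zero_norm_le[where h = "\<lambda>w. deriv F w - 1" and b = b and \<beta> = "b - 1"]
        holomorphic_intros holomorphic_deriv open_band lift_conformal_embedding_deriv_mean_zero[OF L])
      auto
  also have "\<dots> \<le> 1/2"
  proof -
    have "exp (-2 * pi) = 1 / exp (2 * pi)" by (simp add: exp_minus inverse_eq_divide)
    also have "\<dots> \<le> 1 / 87" using exp_two_pi_ge by (intro divide_left_mono) auto
    finally have "exp (-2 * pi) \<le> 1 / 87" .
    then show ?thesis by (simp add: field_simps)
  qed
  finally show ?thesis .
qed

lemma Im_diff_le_of_norm_deriv_minus_1_le:
  assumes S: "convex S" "z \<in> S" "w \<in> S"
    and deriv: "\<And>u. u \<in> S \<Longrightarrow> (F has_field_derivative F' u) (at u within S)"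
    and near_1: "\<And>u. u \<in> S \<Longrightarrow> norm (F' u - 1) \<le> \<epsilon>"
  shows "Im (F z - F w) \<le> Im (z - w) + \<epsilon> * norm (z - w)"
proof -
  have "norm ((F z - z) - (F w - w)) \<le> \<epsilon> * norm (z - w)"
    using S deriv near_1
    by (intro field_differentiable_bound[where f' = "\<lambda>u. F' u - 1"]) (auto intro!: derivative_eq_intros)
  then show ?thesis using abs_Im_le_cmod[of "(F z - z) - (F w - w)"] by simp
qed

lemma convex_straight_cyl: "is_interval I \<Longrightarrow> convex (straight_cyl I)"
proof -
  assume "is_interval I"
  then have "convex (Im -` I)"
    by (intro convex_linear_vimage) (auto simp: is_interval_convex_1 intro: bounded_linear.linear bounded_linear_Im)
  moreover have "Im -` I = straight_cyl I" unfolding straight_cyl_def by auto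
  ultimately show ?thesis by simp
qed

lemma diff_le_cyl_modulus: "bdd_interval I \<Longrightarrow> s \<in> I \<Longrightarrow> t \<in> I \<Longrightarrow> s - t \<le> cyl_modulus I"
  unfolding bdd_interval_def cyl_modulus_def
  by (meson bounded_imp_bdd_above bounded_imp_bdd_below cInf_lower cSup_upper diff_mono)

lemma lift_conformal_embedding_Im_oscillation:
  assumes L: "lift_conformal_embedding b F"
    and I: "bdd_interval I" "cyl_modulus I = 1" "straight_cyl I \<subseteq> band (b - 2)"
    and z: "z \<in> straight_cyl I" and w: "w \<in> straight_cyl I"
  shows "Im (F z) \<le> Im (F w) + 2"
proof -
  have hol: "F holomorphic_on band b" and per: "\<forall>z\<in>band b. F (z + 1) = F z + 1"
    using L unfolding lift_conformal_embedding_def by auto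
  have cyl_band: "straight_cyl I \<subseteq> band b" using I(3) unfolding band_def by auto
  define w' where "w' = w + of_int \<lfloor>Re z - Re w\<rfloor>"
  have w': "w' \<in> straight_cyl I" using w unfolding w'_def straight_cyl_def by simp
  have "Im z \<in> I" "Im w \<in> I" using z w unfolding straight_cyl_def by auto
  then have "Im z - Im w \<le> 1" "Im w - Im z \<le> 1"
    using diff_le_cyl_modulus[OF I(1)] I(2) by metis+
  then have Im_le: "\<bar>Im (z - w')\<bar> \<le> 1" unfolding w'_def by simp
  have "Re (z - w') = frac (Re z - Re w)" unfolding w'_def frac_def by simp
  then have "\<bar>Re (z - w')\<bar> \<le> 1" using frac_ge_0 frac_lt_1 by (metis abs_of_nonneg less_imp_le)
  then have "norm (z - w') \<le> 2" using cmod_le[of "z - w'"] Im_le by linarith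
  moreover have "Im (F z - F w') \<le> Im (z - w') + 1/2 * norm (z - w')"
  proof (rule Im_diff_le_of_norm_deriv_minus_1_le[OF convex_straight_cyl z w'])
    show "is_interval I" using I(1) unfolding bdd_interval_def by blast
    show "(F has_field_derivative deriv F u) (at u within straight_cyl I)" if "u \<in> straight_cyl I" for u
      using that cyl_band by (intro holomorphic_derivI[OF hol open_band]) auto
    show "norm (deriv F u - 1) \<le> 1/2" if "u \<in> straight_cyl I" for u
      using that I(3) by (intro lift_conformal_embedding_norm_deriv_minus_1_le[OF L]) (auto simp: band_def)
  qed
  moreover have "F w' = F w + of_int \<lfloor>Re z - Re w\<rfloor>"
    unfolding w'_def using per cyl_band w by (intro equivariant_add_of_int) auto
  ultimately show ?thesis using Im_le by simp
qed

lemma ex_interval_of_bounded_oscillation: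
  fixes Y :: "real set"
  assumes "Y \<noteq> {}" and osc: "\<And>y y'. y \<in> Y \<Longrightarrow> y' \<in> Y \<Longrightarrow> y \<le> y' + d"
  shows "\<exists>J. bdd_interval J \<and> cyl_modulus J \<le> d \<and> Y \<subseteq> J"
proof -
  obtain y0 where y0: "y0 \<in> Y" using assms(1) by blast
  then have "0 \<le> d" using osc[of y0 y0] by simp
  have bdd: "bdd_below Y" using osc y0 by (intro bdd_belowI[of _ "y0 - d"]) force
  have "Y \<subseteq> {Inf Y..Inf Y + d}"
  proof
    fix y assume y: "y \<in> Y"
    have "y - d \<le> Inf Y" using osc y assms(1) by (intro cInf_greatest) force+
    then show "y \<in> {Inf Y..Inf Y + d}" using cInf_lower[OF y bdd] by simp
  qed
  moreover have "bdd_interval {Inf Y..Inf Y + d}" "cyl_modulus {Inf Y..Inf Y + d} = d"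
    using \<open>0 \<le> d\<close> unfolding bdd_interval_def cyl_modulus_def by auto
  ultimately show ?thesis by (metis order_refl)
qed

theorem lemma6p2:
  fixes b :: real and F :: "complex \<Rightarrow> complex"
  assumes "b > 2"
    and "lift_conformal_embedding b F"
  shows "\<forall>I. bdd_interval I \<and> cyl_modulus I = 1 \<and> straight_cyl I \<subseteq> band (b - 2) \<longrightarrow>
           (\<exists>J. bdd_interval J \<and> cyl_modulus J \<le> 2 \<and> F ` straight_cyl I \<subseteq> straight_cyl J)"
proof (intro allI impI)
  fix I assume I: "bdd_interval I \<and> cyl_modulus I = 1 \<and> straight_cyl I \<subseteq> band (b - 2)"
  then obtain t where "t \<in> I" unfolding bdd_interval_def by blast
  then have "Complex 0 t \<in> straight_cyl I" unfolding straight_cyl_def by simp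
  then have "Im ` F ` straight_cyl I \<noteq> {}" by blast
  moreover have "y \<le> y' + 2" if Y: "y \<in> Im ` F ` straight_cyl I" "y' \<in> Im ` F ` straight_cyl I" for y y'
  proof -
    obtain z w where "z \<in> straight_cyl I" "w \<in> straight_cyl I" "y = Im (F z)" "y' = Im (F w)"
      using Y by blast
    with I show ?thesis using lift_conformal_embedding_Im_oscillation[OF assms(2)] by blast
  qed
  ultimately obtain J where "bdd_interval J" "cyl_modulus J \<le> 2" "Im ` F ` straight_cyl I \<subseteq> J"
    using ex_interval_of_bounded_oscillation[of "Im ` F ` straight_cyl I" 2] by blast
  moreover have "F ` straight_cyl I \<subseteq> straight_cyl J"
    using \<open>Im ` F ` straight_cyl I \<subseteq> J\<close> unfolding straight_cyl_def by auto
  ultimately show "\<exists>J. bdd_interval J \<and> cyl_modulus J \<le> 2 \<and> F ` straight_cyl I \<subseteq> straight_cyl J"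
    by blast
qed

end
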